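(* Let $\mu=\mu(n)$ and $\lambda=\lambda(n)$ be positive integers depending on $n$, and consider the expected runtime of the $(\mu,\lambda)$ EA on the $n$-dimensional OneMax function. 1. If there is a constant $\varepsilon\in(0,1)$ such that $\lambda\le(1-\varepsilon)e\mu$, then the expected runtime is exponential in $n$. 2. If there is $\varepsilon=\varepsilon(n)\in(0,1)$ with $\varepsilon=\omega(1/\sqrt n)$ such that $\lambda\le(1-\varepsilon)e\mu$, then the expected runtime is super-polynomial in $n$.
   Context: OneMax is $f:\{0,1\}^n\to\mathbb{R}$, $f(x)=\sum_i x_i$. The $(\mu,\lambda)$ EA: the initial population $P_0$ consists of $\mu$ independent uniformly random points of $\{0,1\}^n$. In each generation $t=0,1,2,\dots$, it creates $\lambda$ offspring independently; each offspring is obtained by picking a parent uniformly at random from $P_t$ and flipping each bit of a copy of it independently with probability $1/n$ (standard bit mutation). $P_{t+1}$ consists of the $\mu$ offspring with the largest $f$-values, ties broken randomly (parents are discarded). The runtime is the number of fitness evaluations until an optimum (the all-ones string) is first evaluated. *)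

theory Defs
  imports "HOL-Probability.Probability" "HOL-Combinatorics.Multiset_Permutations"
    "HOL-Library.Landau_Symbols"
begin

text \<open>Search points of \{0,1\}^n are boolean lists of length n (True = bit 1).\<close>

type_synonym bits = "bool list"

definition onemax :: "bits \<Rightarrow> nat" where
  "onemax x = length (filter id x)"

definition opt :: "nat \<Rightarrow> bits" where
  "opt n = replicate n True"

fun mutate :: "real \<Rightarrow> bits \<Rightarrow> bits pmf" where
  "mutate p [] = return_pmf []"
| "mutate p (b # bs) =
     bind_pmf (bernoulli_pmf p) (\<lambda>f. bind_pmf (mutate p bs) (\<lambda>r. return_pmf ((if f then \<not> b else b) # r)))"

fun iid_list :: "nat \<Rightarrow> 'a pmf \<Rightarrow> 'a list pmf" where
  "iid_list 0 D = return_pmf []"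
| "iid_list (Suc k) D = bind_pmf D (\<lambda>x. bind_pmf (iid_list k D) (\<lambda>xs. return_pmf (x # xs)))"

definition uniform_parent :: "bits list \<Rightarrow> bits pmf" where
  "uniform_parent P = map_pmf (\<lambda>i. P ! i) (pmf_of_set {..<length P})"

text \<open>The lambda offspring of one generation, in order of creation (= order of evaluation).\<close>
definition offspring :: "nat \<Rightarrow> nat \<Rightarrow> bits list \<Rightarrow> bits list pmf" where
  "offspring n lam P = iid_list lam (bind_pmf (uniform_parent P) (mutate (1 / real n)))"

text \<open>Selection of the mu offspring with largest fitness, ties broken uniformly at random:
  random order of the offspring, then stable sort by decreasing fitness, keep the first mu.\<close>
definition select :: "nat \<Rightarrow> bits list \<Rightarrow> bits list pmf" where
  "select mu ys = map_pmf (\<lambda>zs. take mu (sort_key (\<lambda>x. - int (onemax x)) zs))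
                    (pmf_of_set (permutations_of_multiset (mset ys)))"

definition hit_cost :: "nat \<Rightarrow> bits list \<Rightarrow> nat" where
  "hit_cost n ys = Suc (LEAST i. i < length ys \<and> ys ! i = opt n)"

text \<open>One-generation functional for the expected number of further evaluations from a
  population P (no optimum evaluated yet).  Its k-th iterate from 0 is the expected runtime
  truncated at k generations, i.e. E[min(T, k*lambda)].\<close>
definition gen_step :: "nat \<Rightarrow> nat \<Rightarrow> nat \<Rightarrow> (bits list \<Rightarrow> ennreal) \<Rightarrow> bits list \<Rightarrow> ennreal" where
  "gen_step mu lam n E P =
     (\<integral>\<^sup>+ ys. (if opt n \<in> set ys then of_nat (hit_cost n ys)
               else of_nat lam + (\<integral>\<^sup>+ P'. E P' \<partial>measure_pmf (select mu ys)))
        \<partial>measure_pmf (offspring n lam P))"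

definition exp_remaining :: "nat \<Rightarrow> nat \<Rightarrow> nat \<Rightarrow> bits list \<Rightarrow> ennreal" where
  "exp_remaining mu lam n P = (SUP k. ((gen_step mu lam n) ^^ k) (\<lambda>_. 0) P)"

definition init_pop :: "nat \<Rightarrow> nat \<Rightarrow> bits list pmf" where
  "init_pop mu n = iid_list mu (pmf_of_set {x. length x = n})"

text \<open>Expected runtime (number of fitness evaluations until the optimum is first evaluated)
  of the (mu,lambda) EA on OneMax in dimension n; the mu initial individuals are evaluated first.\<close>
definition expected_runtime :: "nat \<Rightarrow> nat \<Rightarrow> nat \<Rightarrow> ennreal" where
  "expected_runtime mu lam n =
     (\<integral>\<^sup>+ P. (if opt n \<in> set P then of_nat (hit_cost n P)
             else of_nat mu + exp_remaining mu lam n P) \<partial>measure_pmf (init_pop mu n))"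

end

theory Submission
  imports Defs "HOL-Real_Asymp.Real_Asymp"
begin

text \<open>Put \<open>r = 8/\<epsilon>\<close> and weigh a population by its potential \<open>\<Sum>\<^sub>x r^{OneMax(x)}\<close>, so that a
  population containing the optimum has potential at least \<open>r^n\<close>. Standard bit mutation multiplies
  the expected weight of a parent with at most \<open>\<epsilon>\<^sup>2n/16\<close> zero-bits by at most \<open>e^{\<epsilon>-1} \<le> \<mu>/\<lambda>\<close>,
  while a parent with more zero-bits has offspring of expected weight at most \<open>r^n e^{-\<gamma>}\<close>, where
  \<open>\<gamma> = \<epsilon>\<^sup>2n(ln(8/\<epsilon>) - 1)/16\<close>. As the \<open>\<lambda>\<close> offspring choose their parents uniformly among \<open>\<mu>\<close>
  individuals and selection only discards offspring, the expected potential grows by at most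
  \<open>\<lambda> r^n e^{-\<gamma>}\<close> per generation, starting from \<open>\<mu>((1+r)/2)^n \<le> \<mu> r^n e^{-\<gamma>}\<close>. By a union bound
  the first \<open>e^{\<gamma>/4}\<close> evaluations find the optimum only with probability \<open>O(e^{-\<gamma>/2})\<close>, so the
  expected runtime is of order at least \<open>e^{\<gamma>/4}\<close>. For constant \<open>\<epsilon>\<close> the exponent \<open>\<gamma>\<close> is linear
  in \<open>n\<close>, and for \<open>\<epsilon> = \<omega>(1/\<surd>n)\<close> it grows faster than any multiple of \<open>log n\<close>.\<close>

section \<open>Expectations under probability mass functions\<close>

lemma ennreal_diff_le_of_le_add:
  assumes "ennreal a \<le> R + ennreal d" "0 \<le> d"
  shows "ennreal (a - d) \<le> R"
proof (cases R)
  case (real x)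
  then have "a \<le> x + d"
    using assms by (metis add_nonneg_nonneg ennreal_le_iff ennreal_plus)
  then show ?thesis using real by (simp add: ennreal_leI)
qed simp

lemma le_nn_integral_pmf_add:
  assumes "\<And>x. x \<in> set_pmf D \<Longrightarrow> c \<le> f x + g x"
  shows "c \<le> (\<integral>\<^sup>+x. f x \<partial>measure_pmf D) + (\<integral>\<^sup>+x. g x \<partial>measure_pmf D)"
proof -
  have "c = (\<integral>\<^sup>+x. c \<partial>measure_pmf D)"
    by (simp add: measure_pmf.emeasure_space_1)
  also have "\<dots> \<le> (\<integral>\<^sup>+x. f x + g x \<partial>measure_pmf D)"
    using assms by (intro nn_integral_mono_AE) (simp add: AE_measure_pmf_iff)
  also have "\<dots> = (\<integral>\<^sup>+x. f x \<partial>measure_pmf D) + (\<integral>\<^sup>+x. g x \<partial>measure_pmf D)"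
    by (simp add: nn_integral_add)
  finally show ?thesis .
qed

lemma nn_integral_pmf_affine:
  assumes "0 \<le> a" "0 \<le> b" "\<And>x. 0 \<le> f x"
  shows "(\<integral>\<^sup>+x. ennreal (a * f x + b) \<partial>measure_pmf D)
    = ennreal a * (\<integral>\<^sup>+x. ennreal (f x) \<partial>measure_pmf D) + ennreal b"
proof -
  have "(\<integral>\<^sup>+x. ennreal (a * f x + b) \<partial>measure_pmf D)
      = (\<integral>\<^sup>+x. ennreal a * ennreal (f x) + ennreal b \<partial>measure_pmf D)"
    using assms by (intro nn_integral_cong) (simp add: ennreal_plus ennreal_mult)
  then show ?thesis
    by (simp add: nn_integral_add nn_integral_cmult measure_pmf.emeasure_space_1)
qed

lemma set_iid_list: "ys \<in> set_pmf (iid_list k D) \<Longrightarrow> length ys = k \<and> set ys \<subseteq> set_pmf D"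
  by (induction k arbitrary: ys) (simp, fastforce)

lemma nn_integral_iid_list_sum_take:
  assumes h: "\<And>y. 0 \<le> h y"
  shows "(\<integral>\<^sup>+ys. ennreal (\<Sum>y\<leftarrow>take M ys. h y) \<partial>iid_list k D)
    = of_nat (min M k) * (\<integral>\<^sup>+y. ennreal (h y) \<partial>D)"
proof (induction k arbitrary: M)
  case (Suc k)
  show ?case
  proof (cases M)
    case (Suc M')
    have "(\<integral>\<^sup>+ys. ennreal (\<Sum>y\<leftarrow>take M ys. h y) \<partial>iid_list (Suc k) D)
        = (\<integral>\<^sup>+x. (\<integral>\<^sup>+xs. ennreal (h x) + ennreal (\<Sum>y\<leftarrow>take M' xs. h y) \<partial>iid_list k D) \<partial>D)"
      using Suc by (simp del: ennreal_plus, intro nn_integral_cong ennreal_plus)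
        (auto intro!: h sum_list_nonneg)
    also have "\<dots> = (\<integral>\<^sup>+x. ennreal (h x) + of_nat (min M' k) * (\<integral>\<^sup>+y. ennreal (h y) \<partial>D) \<partial>D)"
      by (simp add: nn_integral_add Suc.IH measure_pmf.emeasure_space_1)
    also have "\<dots> = of_nat (min M (Suc k)) * (\<integral>\<^sup>+y. ennreal (h y) \<partial>D)"
      using Suc by (simp add: nn_integral_add measure_pmf.emeasure_space_1 distrib_right)
    finally show ?thesis .
  qed simp
qed simp

lemma nn_integral_iid_list_sum:
  assumes "\<And>y. 0 \<le> h y"
  shows "(\<integral>\<^sup>+ys. ennreal (\<Sum>y\<leftarrow>ys. h y) \<partial>iid_list k D) = of_nat k * (\<integral>\<^sup>+y. ennreal (h y) \<partial>D)"
proof -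
  have "(\<integral>\<^sup>+ys. ennreal (\<Sum>y\<leftarrow>ys. h y) \<partial>iid_list k D)
      = (\<integral>\<^sup>+ys. ennreal (\<Sum>y\<leftarrow>take k ys. h y) \<partial>iid_list k D)"
    by (intro nn_integral_cong_AE) (auto simp: AE_measure_pmf_iff dest: set_iid_list)
  then show ?thesis by (simp add: nn_integral_iid_list_sum_take[OF assms])
qed

section \<open>OneMax and standard bit mutation\<close>

lemma onemax_Cons: "onemax (b # xs) = (if b then 1 else 0) + onemax xs"
  by (simp add: onemax_def)

lemma onemax_le_length: "onemax xs \<le> length xs"
  by (simp add: onemax_def)

lemma onemax_opt [simp]: "onemax (opt n) = n"
  by (simp add: onemax_def opt_def)

lemma finite_bits: "finite {x::bits. length x = n}"
  using finite_lists_length_eq[of "UNIV::bool set" n] by simp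

lemma bits_nonempty: "{x::bits. length x = n} \<noteq> {}"
  by (auto intro: exI[of _ "replicate n True"])

lemma card_bits: "card {x::bits. length x = n} = 2 ^ n"
  using card_lists_length_eq[of "UNIV::bool set" n] by (simp add: card_UNIV_bool)

lemma sum_bits_power_onemax: "(\<Sum>x\<in>{x::bits. length x = n}. (r::real) ^ onemax x) = (1 + r) ^ n"
proof (induction n)
  case 0
  then show ?case by (simp add: onemax_def)
next
  case (Suc n)
  have eq: "{x::bits. length x = Suc n} = (\<lambda>(xs, b). b # xs) ` ({x. length x = n} \<times> UNIV)"
    using lists_length_Suc_eq[of "UNIV::bool set" n] by simp
  have inj: "inj_on (\<lambda>(xs, b::bool). b # xs) ({x. length x = n} \<times> UNIV)"
    by (auto simp: inj_on_def)
  have "(\<Sum>x\<in>{x::bits. length x = Suc n}. r ^ onemax x)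
      = (\<Sum>xs\<in>{x. length x = n}. \<Sum>b\<in>UNIV. r ^ onemax (b # xs))"
    unfolding eq by (subst sum.reindex[OF inj]) (simp add: case_prod_unfold sum.cartesian_product)
  also have "\<dots> = (\<Sum>xs\<in>{x. length x = n}. (1 + r) * r ^ onemax xs)"
    by (simp add: UNIV_bool onemax_Cons algebra_simps)
  finally show ?case using Suc by (simp add: sum_distrib_left[symmetric])
qed

lemma nn_integral_uniform_bits_power:
  assumes "0 \<le> r"
  shows "(\<integral>\<^sup>+x. ennreal (r ^ onemax x) \<partial>pmf_of_set {x::bits. length x = n}) = ennreal (((1 + r) / 2) ^ n)"
proof -
  have "(\<integral>\<^sup>+x. ennreal (r ^ onemax x) \<partial>pmf_of_set {x::bits. length x = n})
      = (\<Sum>x\<in>{x::bits. length x = n}. ennreal (r ^ onemax x)) / of_nat (2 ^ n)"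
    using finite_bits bits_nonempty by (simp add: nn_integral_pmf_of_set card_bits)
  also have "\<dots> = ennreal ((1 + r) ^ n) / ennreal (2 ^ n)"
    using assms by (simp only: sum_ennreal zero_le_power sum_bits_power_onemax
        ennreal_of_nat_eq_real_of_nat of_nat_power of_nat_numeral)
  also have "\<dots> = ennreal (((1 + r) / 2) ^ n)"
    using assms by (simp add: divide_ennreal power_divide)
  finally show ?thesis .
qed

lemma length_mutate: "y \<in> set_pmf (mutate p x) \<Longrightarrow> length y = length x"
  by (induction x arbitrary: y) auto

lemma nn_integral_mutate_power_onemax:
  assumes p: "0 \<le> p" "p \<le> 1" and r: "0 \<le> r"
  shows "(\<integral>\<^sup>+y. ennreal (r ^ onemax y) \<partial>mutate p x) =
    ennreal ((p + (1-p)*r) ^ onemax x * ((1-p) + p*r) ^ (length x - onemax x))"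
proof (induction x)
  case Nil
  then show ?case by (simp add: onemax_def)
next
  case (Cons b bs)
  define A where "A = (p + (1-p)*r) ^ onemax bs * ((1-p) + p*r) ^ (length bs - onemax bs)"
  have A: "0 \<le> A" using p r by (simp add: A_def)
  have head: "(\<integral>\<^sup>+y. ennreal (r ^ onemax (c # y)) \<partial>mutate p bs) = ennreal ((if c then r else 1) * A)"
    for c
  proof -
    have "(\<integral>\<^sup>+y. ennreal (r ^ onemax (c # y)) \<partial>mutate p bs)
        = ennreal (if c then r else 1) * (\<integral>\<^sup>+y. ennreal (r ^ onemax y) \<partial>mutate p bs)"
      using r by (simp add: onemax_Cons ennreal_mult nn_integral_cmult)
    then show ?thesis using Cons r A by (simp add: A_def ennreal_mult)
  qed
  have "(\<integral>\<^sup>+y. ennreal (r ^ onemax y) \<partial>mutate p (b # bs))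
      = ennreal (p * ((if b then 1 else r) * A) + (1 - p) * ((if b then r else 1) * A))"
    using p r A by (cases b) (simp_all add: head ennreal_mult[symmetric] ennreal_plus[symmetric]
        mult.commute del: ennreal_plus)
  also have "\<dots> = ennreal ((if b then p + (1-p)*r else (1-p) + p*r) * A)"
    by (simp add: algebra_simps)
  finally show ?case
    using onemax_le_length[of bs] by (simp add: A_def onemax_Cons Suc_diff_le mult_ac del: nn_integral_bind_pmf)
qed

section \<open>The potential of a population\<close>

definition potential :: "real \<Rightarrow> bits list \<Rightarrow> real" where
  "potential r xs = (\<Sum>y\<leftarrow>xs. r ^ onemax y)"

lemma potential_nonneg: "0 \<le> r \<Longrightarrow> 0 \<le> potential r xs"
  by (induction xs) (auto simp: potential_def)

lemma power_onemax_le_potential: "0 \<le> r \<Longrightarrow> x \<in> set xs \<Longrightarrow> r ^ onemax x \<le> potential r xs"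
  using potential_nonneg[of r, unfolded potential_def]
  by (induction xs) (auto simp: potential_def intro: add_increasing add_increasing2)

lemma potential_ge_if_opt_mem: "0 \<le> r \<Longrightarrow> opt n \<in> set xs \<Longrightarrow> r ^ n \<le> potential r xs"
  using power_onemax_le_potential[of r "opt n" xs] by simp

lemma potential_mset: "potential r xs = sum_mset (image_mset (\<lambda>y. r ^ onemax y) (mset xs))"
  unfolding potential_def by (induction xs) auto

lemma set_uniform_parent: "P \<noteq> [] \<Longrightarrow> set_pmf (uniform_parent P) = set P"
  by (auto simp: uniform_parent_def set_conv_nth lessThan_empty_iff)

lemma nn_integral_uniform_parent:
  "P \<noteq> [] \<Longrightarrow> (\<integral>\<^sup>+x. g x \<partial>uniform_parent P) = (\<Sum>i<length P. g (P ! i)) / of_nat (length P)"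
  by (simp add: uniform_parent_def nn_integral_pmf_of_set lessThan_empty_iff)

lemma set_select:
  assumes "P' \<in> set_pmf (select mu ys)"
  shows "length P' = min mu (length ys)" "set P' \<subseteq> set ys"
    "0 \<le> r \<Longrightarrow> potential r P' \<le> potential r ys"
proof -
  define ranked where "ranked zs = sort_key (\<lambda>x. - int (onemax x)) zs" for zs
  obtain zs where zs: "zs \<in> permutations_of_multiset (mset ys)" and P': "P' = take mu (ranked zs)"
    using assms by (auto simp: select_def ranked_def)
  have ms: "mset (ranked zs) = mset ys"
    using permutations_of_multisetD[OF zs] by (simp add: ranked_def)
  have "length (ranked zs) = length ys"
    by (metis ms size_mset)
  then show "length P' = min mu (length ys)"
    using P' by simp
  show "set P' \<subseteq> set ys"
    using P' ms by (metis set_mset_mset set_take_subset)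
  assume r: "0 \<le> r"
  have "potential r P' \<le> potential r P' + potential r (drop mu (ranked zs))"
    using potential_nonneg[OF r] by simp
  also have "\<dots> = potential r (ranked zs)"
    unfolding P' potential_def by (simp flip: sum_list_append map_append)
  also have "\<dots> = potential r ys"
    by (simp only: potential_mset ms)
  finally show "potential r P' \<le> potential r ys" .
qed

lemma set_offspring:
  assumes "ys \<in> set_pmf (offspring n lam P)" "P \<noteq> []" "\<forall>x\<in>set P. length x = n"
  shows "length ys = lam \<and> (\<forall>y\<in>set ys. length y = n)"
  using set_iid_list[OF assms(1)[unfolded offspring_def]] assms(2,3)
  by (auto simp: set_uniform_parent dest!: length_mutate)

lemma nn_integral_potential_offspring_le:
  assumes P: "P \<noteq> []" "\<forall>x\<in>set P. length x = n" and r: "0 \<le> r" and c: "0 \<le> c" and B: "0 \<le> B"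
    and mutation: "\<And>x. length x = n \<Longrightarrow>
      (\<integral>\<^sup>+y. ennreal (r ^ onemax y) \<partial>mutate (1 / real n) x) \<le> ennreal (c * r ^ onemax x + B)"
  shows "(\<integral>\<^sup>+ys. ennreal (potential r ys) \<partial>offspring n lam P)
    \<le> ennreal (real lam * (c * potential r P / real (length P) + B))"
proof -
  have "(\<integral>\<^sup>+ys. ennreal (potential r ys) \<partial>offspring n lam P)
      = of_nat lam * (\<integral>\<^sup>+y. ennreal (r ^ onemax y) \<partial>bind_pmf (uniform_parent P) (mutate (1 / real n)))"
    unfolding offspring_def potential_def using r by (intro nn_integral_iid_list_sum) simp
  also have "\<dots> = of_nat lam *
      ((\<Sum>i<length P. \<integral>\<^sup>+y. ennreal (r ^ onemax y) \<partial>mutate (1 / real n) (P ! i)) / of_nat (length P))"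
    by (simp only: nn_integral_bind_pmf nn_integral_uniform_parent[OF P(1)])
  also have "\<dots> \<le> of_nat lam * ((\<Sum>i<length P. ennreal (c * r ^ onemax (P ! i) + B)) / of_nat (length P))"
    using P by (intro mult_left_mono divide_right_mono_ennreal sum_mono mutation) auto
  also have "(\<Sum>i<length P. ennreal (c * r ^ onemax (P ! i) + B))
      = ennreal (c * potential r P + real (length P) * B)"
    using r c B by (subst sum_ennreal) (auto simp: sum.distrib sum_distrib_left[symmetric] potential_def
        sum_list_sum_nth atLeast0LessThan)
  also have "ennreal (c * potential r P + real (length P) * B) / of_nat (length P)
      = ennreal (c * potential r P / real (length P) + B)"
    using P r c B by (simp add: ennreal_of_nat_eq_real_of_nat divide_ennreal add_divide_distrib
        potential_nonneg del: ennreal_plus)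
  also have "of_nat lam * \<dots> = ennreal (real lam * (c * potential r P / real (length P) + B))"
    using r c B potential_nonneg[OF r, of P]
    by (subst ennreal_mult) (auto simp: ennreal_of_nat_eq_real_of_nat)
  finally show ?thesis .
qed

lemma set_init_pop:
  assumes "P \<in> set_pmf (init_pop mu n)"
  shows "length P = mu" "\<forall>x\<in>set P. length x = n"
  using set_iid_list[OF assms[unfolded init_pop_def]] finite_bits bits_nonempty by auto

lemma nn_integral_potential_take_init_pop:
  "0 \<le> r \<Longrightarrow> (\<integral>\<^sup>+P. ennreal (potential r (take M P)) \<partial>init_pop mu n)
    = of_nat (min M mu) * ennreal (((1 + r) / 2) ^ n)"
  unfolding init_pop_def potential_def
  by (simp add: nn_integral_iid_list_sum_take nn_integral_uniform_bits_power)

lemma nn_integral_potential_init_pop: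
  "0 \<le> r \<Longrightarrow> (\<integral>\<^sup>+P. ennreal (potential r P) \<partial>init_pop mu n) = of_nat mu * ennreal (((1 + r) / 2) ^ n)"
  unfolding init_pop_def potential_def
  by (simp add: nn_integral_iid_list_sum nn_integral_uniform_bits_power)

section \<open>Drift of the potential under mutation\<close>

definition barrier_exponent :: "real \<Rightarrow> nat \<Rightarrow> real" where
  "barrier_exponent eps n = eps^2 * n * (ln (8/eps) - 1) / 16"

lemma barrier_exponent_le:
  assumes "0 < eps" "eps < 1"
  shows "barrier_exponent eps n \<le> n / 4"
proof -
  have "exp 3 \<ge> (8::real)"
    using exp_ge_add_one_self[of 1] power_mono[of 2 "exp (1::real)" 3]
    by (simp add: exp_of_nat_mult[symmetric])
  then have "ln 8 \<le> (3::real)"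
    by (metis exp_gt_zero exp_le_cancel_iff exp_ln zero_less_numeral)
  moreover have "ln (1/eps) \<le> 1/eps - 1"
    using assms by (intro ln_le_minus_one) auto
  moreover have "ln (8/eps) = ln 8 + ln (1/eps)"
    using assms by (simp add: ln_div)
  ultimately have "eps^2 * (ln (8/eps) - 1) \<le> eps^2 * (1 + 1/eps)"
    by (intro mult_left_mono) auto
  also have "\<dots> = eps^2 + eps"
    using assms by (simp add: power2_eq_square field_simps)
  also have "\<dots> \<le> 4"
    using assms power_le_one[of eps 2] by simp
  finally have "eps^2 * (ln (8/eps) - 1) * n \<le> 4 * real n"
    by (rule mult_right_mono) simp
  then show ?thesis
    by (simp add: barrier_exponent_def mult_ac)
qed

lemma barrier_exponent_ge:
  assumes "0 < eps" "eps < 1"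
  shows "eps^2 * n / 32 \<le> barrier_exponent eps n" "eps^2 * n * ln (1/eps) / 16 \<le> barrier_exponent eps n"
proof -
  have "exp (3/2) \<le> (8::real)"
  proof -
    have "exp (3/2::real) ^ 2 = exp 1 ^ 3"
      by (simp add: exp_of_nat_mult[symmetric])
    also have "\<dots> \<le> 3 ^ 3"
      using exp_le by (intro power_mono) auto
    finally have "exp (3/2::real) ^ 2 \<le> 8 ^ 2"
      by simp
    then show ?thesis
      by (rule power2_le_imp_le) simp
  qed
  then have "3/2 \<le> ln (8::real)"
    by (subst ln_ge_iff) auto
  moreover have "ln (8/eps) = ln 8 + ln (1/eps)" "0 \<le> ln (1/eps)"
    using assms by (simp_all add: ln_div)
  ultimately have "1/2 \<le> ln (8/eps) - 1" "ln (1/eps) \<le> ln (8/eps) - 1"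
    by linarith+
  then have "eps^2 * n * (1/2) \<le> eps^2 * n * (ln (8/eps) - 1)"
    "eps^2 * n * ln (1/eps) \<le> eps^2 * n * (ln (8/eps) - 1)"
    by (intro mult_left_mono; simp)+
  then show "eps^2 * n / 32 \<le> barrier_exponent eps n" "eps^2 * n * ln (1/eps) / 16 \<le> barrier_exponent eps n"
    unfolding barrier_exponent_def by linarith+
qed

lemma mutation_factor_le_exp:
  fixes f k :: nat and r :: real
  assumes r: "1 \<le> r" and n: "n = f + k" "1 \<le> n"
  shows "(1/n + (1 - 1/n)*r)^f * ((1 - 1/n) + r/n)^k
    \<le> r^f * exp (((r - 1) * k - (1 - 1/r) * f) / n)"
proof -
  define a where "a = 1 / real n"
  have a: "0 < a" "a \<le> 1" using n by (auto simp: a_def)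
  have one: "a + (1-a)*r \<le> r * exp (- a * (1 - 1/r))"
  proof -
    have "a + (1-a)*r = r * (1 + (- a * (1 - 1/r)))" using r by (simp add: field_simps)
    also have "\<dots> \<le> r * exp (- a * (1 - 1/r))"
      using r by (intro mult_left_mono exp_ge_add_one_self) auto
    finally show ?thesis .
  qed
  have zero: "(1 - a) + a*r \<le> exp (a * (r - 1))"
    using exp_ge_add_one_self[of "a * (r - 1)"] by (simp add: algebra_simps)
  have "(a + (1-a)*r)^f * ((1-a) + a*r)^k \<le> (r * exp (- a * (1 - 1/r)))^f * (exp (a * (r - 1)))^k"
    using a r one zero by (intro mult_mono power_mono) (auto intro!: add_nonneg_nonneg)
  also have "\<dots> = r^f * exp (a * ((r - 1) * k - (1 - 1/r) * f))"
    by (simp add: power_mult_distrib exp_of_nat_mult[symmetric] exp_add[symmetric] algebra_simps)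
  finally show ?thesis by (simp add: a_def field_simps)
qed

lemma mutation_exponent_le_near_opt:
  fixes f k :: nat and eps mu lam r :: real
  assumes eps: "0 < eps" "eps < 1" and r: "r = 8 / eps" and n: "n = f + k" "1 \<le> n"
    and k: "k \<le> eps^2 / 16 * n"
    and lam: "lam \<le> (1 - eps) * exp 1 * mu" and mu: "0 < mu" and lam_pos: "0 < lam"
  shows "exp (((r - 1) * k - (1 - 1/r) * f) / n) \<le> mu / lam"
proof -
  define E where "E = ((r - 1) * k - (1 - 1/r) * f) / n"
  have r8: "8 \<le> r" using eps by (simp add: r le_divide_eq)
  have "(r - 1) * k - (1 - 1/r) * f = (r - 1/r) * k - (1 - 1/r) * n"
    using n(1) by (simp add: algebra_simps)
  then have "E = (r - 1/r) * (k / n) - (1 - 1/r)"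
    using n(2) by (simp add: E_def diff_divide_distrib)
  also have "\<dots> \<le> r * (eps^2 / 16) - (1 - 1/r)"
    using k r8 n(2) by (intro diff_right_mono mult_mono) (auto simp: field_simps)
  also have "\<dots> \<le> eps - 1"
    using eps by (simp add: r power2_eq_square field_simps)
  finally have "lam * exp E \<le> (1 - eps) * exp 1 * mu * exp (eps - 1)"
    using lam lam_pos eps by (intro mult_mono) auto
  also have "\<dots> = ((1 - eps) * exp eps) * mu"
    by (simp add: exp_diff field_simps)
  also have "\<dots> \<le> (exp (-eps) * exp eps) * mu"
    using exp_ge_add_one_self[of "-eps"] mu by (intro mult_right_mono) auto
  finally show ?thesis
    using lam_pos by (simp add: E_def exp_minus field_simps)
qed

lemma mutation_factor_le_far_from_opt:
  fixes f k :: nat and eps r :: real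
  assumes eps: "0 < eps" "eps < 1" and r: "r = 8 / eps" and n: "n = f + k" "r \<le> n"
    and k: "eps^2 / 16 * n < k"
  shows "r^f * exp (((r - 1) * k - (1 - 1/r) * f) / n) \<le> r^n * exp (- barrier_exponent eps n)"
proof -
  define E where "E = ((r - 1) * k - (1 - 1/r) * f) / n"
  have r8: "8 \<le> r" using eps by (simp add: r le_divide_eq)
  have lnr: "1 \<le> ln r"
    using exp_le r8 by (subst ln_ge_iff) auto
  have "0 \<le> (1 - 1/r) * f" using r8 by simp
  then have "(r - 1) * k - (1 - 1/r) * f \<le> r * k" by (simp add: algebra_simps)
  then have "E \<le> (r / n) * k"
    unfolding E_def by (simp add: divide_right_mono)
  also have "\<dots> \<le> k"
    using n r8 by (intro mult_left_le_one_le) auto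
  finally have "r^f * exp E \<le> exp (f * ln r + k)"
    using r8 by (simp add: exp_add exp_of_nat_mult)
  also have "\<dots> = exp (n * ln r - k * (ln r - 1))"
    using n by (simp add: algebra_simps)
  also have "\<dots> \<le> exp (n * ln r - eps^2 / 16 * n * (ln r - 1))"
    using k lnr by (intro exp_mono diff_mono mult_right_mono) auto
  also have "\<dots> = exp (n * ln r) * exp (- barrier_exponent eps n)"
    by (simp add: barrier_exponent_def r exp_add[symmetric])
  also have "exp (n * ln r) = r^n"
    using r8 by (simp add: exp_of_nat_mult)
  finally show ?thesis
    by (simp add: E_def)
qed

lemma mutation_factor_le:
  fixes f k :: nat and eps mu lam :: real
  assumes eps: "0 < eps" "eps < 1" and n: "n = f + k" "8 / eps \<le> n"
    and lam: "lam \<le> (1 - eps) * exp 1 * mu" and mu: "0 < mu" and lam_pos: "0 < lam"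
  shows "(1/n + (1 - 1/n)*(8/eps))^f * ((1 - 1/n) + (8/eps)/n)^k
    \<le> (mu/lam) * (8/eps)^f + (8/eps)^n * exp (- barrier_exponent eps n)"
proof -
  define r where "r = 8 / eps"
  define E where "E = ((r - 1) * k - (1 - 1/r) * f) / n"
  have r8: "8 \<le> r" using eps by (simp add: r_def le_divide_eq)
  have n1: "1 \<le> n" using n r8 by (simp add: r_def)
  have "(1/n + (1 - 1/n)*r)^f * ((1 - 1/n) + r/n)^k \<le> r^f * exp E"
    unfolding E_def using r8 n n1 by (intro mutation_factor_le_exp) auto
  also have "r^f * exp E \<le> (mu/lam) * r^f + r^n * exp (- barrier_exponent eps n)"
  proof (cases "k \<le> eps^2 / 16 * n")
    case True
    then have "r^f * exp E \<le> r^f * (mu/lam)"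
      using mutation_exponent_le_near_opt[OF eps r_def n(1) n1 True lam mu lam_pos] r8
      by (intro mult_left_mono) (auto simp: E_def)
    moreover have "0 \<le> r^n * exp (- barrier_exponent eps n)"
      using r8 by simp
    ultimately show ?thesis
      by (simp add: mult.commute)
  next
    case False
    then have "r^f * exp E \<le> r^n * exp (- barrier_exponent eps n)"
      using mutation_factor_le_far_from_opt[OF eps r_def n(1)] n by (simp add: E_def r_def)
    then show ?thesis
      using mu lam_pos r8 by (simp add: add_increasing)
  qed
  finally show ?thesis by (simp add: r_def)
qed

lemma nn_integral_mutate_power_onemax_le:
  fixes eps :: real and mu lam n :: nat
  assumes eps: "0 < eps" "eps < 1" and n: "8 / eps \<le> n"
    and lam: "real lam \<le> (1 - eps) * exp 1 * real mu" and mu: "1 \<le> mu" "mu \<le> lam"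
    and x: "length x = n"
  shows "(\<integral>\<^sup>+y. ennreal ((8/eps) ^ onemax y) \<partial>mutate (1 / real n) x)
    \<le> ennreal (real mu / real lam * (8/eps) ^ onemax x + (8/eps)^n * exp (- barrier_exponent eps n))"
proof -
  have "8 \<le> 8 / eps" using eps by (simp add: le_divide_eq)
  then have n1: "1 \<le> real n" using n by linarith
  have "(\<integral>\<^sup>+y. ennreal ((8/eps) ^ onemax y) \<partial>mutate (1 / real n) x)
      = ennreal ((1 / real n + (1 - 1 / real n) * (8/eps)) ^ onemax x
          * ((1 - 1 / real n) + (8/eps) / real n) ^ (n - onemax x))"
    using n1 eps x by (subst nn_integral_mutate_power_onemax) (auto simp: mult.commute)
  also have "\<dots> \<le> ennreal (real mu / real lam * (8/eps) ^ onemax x + (8/eps)^n * exp (- barrier_exponent eps n))"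
    using eps n lam mu onemax_le_length[of x] x
    by (intro ennreal_leI mutation_factor_le) auto
  finally show ?thesis .
qed

definition potential_drift_bounded :: "nat \<Rightarrow> nat \<Rightarrow> nat \<Rightarrow> real \<Rightarrow> real \<Rightarrow> bool" where
  "potential_drift_bounded mu lam n r B \<longleftrightarrow> (\<forall>P. length P = mu \<longrightarrow> (\<forall>x\<in>set P. length x = n) \<longrightarrow>
    (\<integral>\<^sup>+ys. ennreal (potential r ys) \<partial>offspring n lam P) \<le> ennreal (potential r P + real lam * B))"

lemma potential_drift_bounded_mutation:
  fixes eps :: real and mu lam n :: nat
  assumes eps: "0 < eps" "eps < 1" and n: "8 / eps \<le> n"
    and lam: "real lam \<le> (1 - eps) * exp 1 * real mu" and mu: "1 \<le> mu" "mu \<le> lam"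
  shows "potential_drift_bounded mu lam n (8/eps) ((8/eps)^n * exp (- barrier_exponent eps n))"
  unfolding potential_drift_bounded_def
proof (intro allI impI)
  fix P :: "bits list"
  assume P: "length P = mu" "\<forall>x\<in>set P. length x = n"
  define B where "B = (8/eps)^n * exp (- barrier_exponent eps n)"
  have "(\<integral>\<^sup>+ys. ennreal (potential (8/eps) ys) \<partial>offspring n lam P)
      \<le> ennreal (real lam * (real mu / real lam * potential (8/eps) P / real (length P) + B))"
    using P mu eps nn_integral_mutate_power_onemax_le[OF eps n lam mu]
    by (intro nn_integral_potential_offspring_le) (auto simp: B_def)
  also have "real lam * (real mu / real lam * potential (8/eps) P / real (length P) + B)
      = potential (8/eps) P + real lam * B"
    using P mu by (simp add: field_simps)
  finally show "(\<integral>\<^sup>+ys. ennreal (potential (8/eps) ys) \<partial>offspring n lam P)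
      \<le> ennreal (potential (8/eps) P + real lam * B)" .
qed

section \<open>Lower bounds on the expected runtime\<close>

text \<open>The error term \<open>k\<lambda>(\<Phi>(P) + k\<lambda>B)/r^n\<close> of the induction below is a union bound: each of the
  \<open>k\<lambda>\<close> offspring is optimal with probability at most its expected weight divided by \<open>r^n\<close>,
  and the expected potential \<open>\<Phi>\<close> grows by at most \<open>\<lambda>B\<close> per generation.\<close>
lemma gen_step_integrand_ge:
  fixes mu lam n k :: nat and r B :: real
  assumes mu: "1 \<le> mu" "mu \<le> lam" and r: "0 < r" and B: "0 \<le> B"
    and ys: "length ys = lam" "\<forall>y\<in>set ys. length y = n"
    and IH: "\<And>P'. length P' = mu \<Longrightarrow> \<forall>x\<in>set P'. length x = n \<Longrightarrow>
      ennreal (real k * real lam) \<le> E P' + ennreal (real k * real lam * (potential r P' + real k * real lam * B) / r^n)"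
  shows "ennreal ((real k + 1) * real lam)
    \<le> (if opt n \<in> set ys then of_nat (hit_cost n ys) else of_nat lam + (\<integral>\<^sup>+P'. E P' \<partial>select mu ys))
      + ennreal ((real k + 1) * real lam * (potential r ys + real k * real lam * B) / r^n)"
proof (cases "opt n \<in> set ys")
  case True
  have "r^n \<le> potential r ys + real k * real lam * B"
    using potential_ge_if_opt_mem[OF _ True, of r] r B by (simp add: add_increasing2)
  then have "(real k + 1) * real lam * 1 \<le> (real k + 1) * real lam * ((potential r ys + real k * real lam * B) / r^n)"
    using r by (intro mult_left_mono) auto
  then show ?thesis
    using True by (simp add: ennreal_leI add_increasing)
next
  case False
  define d where "d = real k * real lam * (potential r ys + real k * real lam * B) / r^n"
  have "ennreal (real k * real lam) \<le> E P' + ennreal d" if P': "P' \<in> set_pmf (select mu ys)" for P'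
  proof -
    have "length P' = mu" "\<forall>x\<in>set P'. length x = n"
      using set_select[OF P'] ys mu by auto
    note IH = IH[OF this]
    have "real k * real lam * (potential r P' + real k * real lam * B) / r^n \<le> d"
      unfolding d_def using set_select(3)[OF P', of r] r by (intro divide_right_mono mult_left_mono) auto
    then show ?thesis
      using IH by (meson add_left_mono ennreal_leI order_trans)
  qed
  then have "ennreal (real k * real lam) \<le> (\<integral>\<^sup>+P'. E P' \<partial>select mu ys) + (\<integral>\<^sup>+_. ennreal d \<partial>select mu ys)"
    by (rule le_nn_integral_pmf_add)
  then have "ennreal (real k * real lam) \<le> (\<integral>\<^sup>+P'. E P' \<partial>select mu ys) + ennreal d"
    by (simp add: measure_pmf.emeasure_space_1)
  then have "ennreal (real lam + real k * real lam) \<le> of_nat lam + ((\<integral>\<^sup>+P'. E P' \<partial>select mu ys) + ennreal d)"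
    by (simp add: ennreal_of_nat_eq_real_of_nat add_left_mono)
  moreover have "d \<le> (real k + 1) * real lam * (potential r ys + real k * real lam * B) / r^n"
    unfolding d_def using r B potential_nonneg[of r ys]
    by (intro divide_right_mono mult_right_mono) auto
  ultimately show ?thesis
    using False by (simp add: algebra_simps add_left_mono ennreal_leI order_trans)
qed

lemma gen_step_ge:
  fixes mu lam n k :: nat and r B :: real
  assumes mu: "1 \<le> mu" "mu \<le> lam" and r: "0 < r" and B: "0 \<le> B"
    and drift: "potential_drift_bounded mu lam n r B"
    and P: "length P = mu" "\<forall>x\<in>set P. length x = n"
    and IH: "\<And>P'. length P' = mu \<Longrightarrow> \<forall>x\<in>set P'. length x = n \<Longrightarrow>
      ennreal (real k * real lam) \<le> E P' + ennreal (real k * real lam * (potential r P' + real k * real lam * B) / r^n)"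
  shows "ennreal ((real k + 1) * real lam)
    \<le> gen_step mu lam n E P + ennreal ((real k + 1) * real lam * (potential r P + (real k + 1) * real lam * B) / r^n)"
proof -
  define a where "a = (real k + 1) * real lam / r^n"
  have a: "0 \<le> a" using r by (simp add: a_def)
  have P_ne: "P \<noteq> []" using P mu by auto
  have "ennreal ((real k + 1) * real lam) \<le> gen_step mu lam n E P
      + (\<integral>\<^sup>+ys. ennreal (a * potential r ys + a * (real k * real lam * B)) \<partial>offspring n lam P)"
    unfolding gen_step_def
  proof (rule le_nn_integral_pmf_add)
    fix ys assume "ys \<in> set_pmf (offspring n lam P)"
    then have "length ys = lam" "\<forall>y\<in>set ys. length y = n"
      using set_offspring[OF _ P_ne P(2)] by auto
    from gen_step_integrand_ge[OF mu r B this IH]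
    show "ennreal ((real k + 1) * real lam)
      \<le> (if opt n \<in> set ys then of_nat (hit_cost n ys) else of_nat lam + (\<integral>\<^sup>+P'. E P' \<partial>select mu ys))
        + ennreal (a * potential r ys + a * (real k * real lam * B))"
      by (simp add: a_def add_divide_distrib distrib_left)
  qed
  also have "(\<integral>\<^sup>+ys. ennreal (a * potential r ys + a * (real k * real lam * B)) \<partial>offspring n lam P)
      = ennreal a * (\<integral>\<^sup>+ys. ennreal (potential r ys) \<partial>offspring n lam P) + ennreal (a * (real k * real lam * B))"
    using a B r by (intro nn_integral_pmf_affine) (auto intro: potential_nonneg)
  also have "\<dots> \<le> ennreal a * ennreal (potential r P + real lam * B) + ennreal (a * (real k * real lam * B))"
    using drift P unfolding potential_drift_bounded_def by (intro add_right_mono mult_left_mono) auto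
  also have "\<dots> = ennreal ((real k + 1) * real lam * (potential r P + (real k + 1) * real lam * B) / r^n)"
    using a B r potential_nonneg[of r P]
    by (simp add: ennreal_mult[symmetric] ennreal_plus[symmetric] a_def field_simps del: ennreal_plus)
  finally show ?thesis
    by (simp add: add_left_mono)
qed

lemma truncated_runtime_ge:
  fixes mu lam n k :: nat and r B :: real
  assumes mu: "1 \<le> mu" "mu \<le> lam" and r: "0 < r" and B: "0 \<le> B"
    and drift: "potential_drift_bounded mu lam n r B"
  shows "length P = mu \<Longrightarrow> \<forall>x\<in>set P. length x = n \<Longrightarrow>
    ennreal (real k * real lam) \<le> ((gen_step mu lam n) ^^ k) (\<lambda>_. 0) P
      + ennreal (real k * real lam * (potential r P + real k * real lam * B) / r^n)"
proof (induction k arbitrary: P)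
  case (Suc k)
  then show ?case
    using gen_step_ge[OF mu r B drift, of P k "((gen_step mu lam n) ^^ k) (\<lambda>_. 0)"]
    by (simp add: add.commute)
qed simp

lemma le_hit_cost:
  assumes "opt n \<in> set P" "opt n \<notin> set (take M P)"
  shows "M \<le> hit_cost n P"
proof -
  define i where "i = (LEAST i. i < length P \<and> P ! i = opt n)"
  have "i < length P \<and> P ! i = opt n"
    unfolding i_def using assms(1) by (rule LeastI_ex[OF iffD1[OF in_set_conv_nth]])
  then have "\<not> i < M"
    using assms(2) by (metis in_set_conv_nth length_take min_less_iff_conj nth_take)
  then show ?thesis by (simp add: hit_cost_def i_def[symmetric])
qed

lemma runtime_after_init_ge:
  fixes mu lam n k :: nat and r B :: real
  assumes mu: "1 \<le> mu" "mu \<le> lam" and r: "0 < r" and B: "0 \<le> B"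
    and drift: "potential_drift_bounded mu lam n r B"
    and P: "length P = mu" "\<forall>x\<in>set P. length x = n"
  shows "ennreal (real k * real lam)
    \<le> (if opt n \<in> set P then of_nat (hit_cost n P) else of_nat mu + exp_remaining mu lam n P)
      + ennreal (real k * real lam * (potential r P + real k * real lam * B) / r^n)"
proof (cases "opt n \<in> set P")
  case True
  have "r^n \<le> potential r P + real k * real lam * B"
    using potential_ge_if_opt_mem[OF _ True, of r] r B by (simp add: add_increasing2)
  then have "real k * real lam * 1 \<le> real k * real lam * ((potential r P + real k * real lam * B) / r^n)"
    using r by (intro mult_left_mono) auto
  then show ?thesis
    using True by (simp add: ennreal_leI add_increasing)
next
  case False
  have "((gen_step mu lam n) ^^ k) (\<lambda>_. 0) P \<le> of_nat mu + exp_remaining mu lam n P"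
    by (auto simp: exp_remaining_def intro!: add_increasing SUP_upper)
  then show ?thesis
    using truncated_runtime_ge[OF mu r B drift P, of k] False
    by (simp add: order_trans[OF _ add_right_mono])
qed

lemma expected_runtime_ge_generations:
  fixes mu lam n k :: nat and r B w :: real
  assumes mu: "1 \<le> mu" "mu \<le> lam" and r: "0 < r" and B: "0 \<le> B"
    and drift: "potential_drift_bounded mu lam n r B"
    and init: "((1 + r) / 2) ^ n \<le> r^n * w" and B_le: "B \<le> r^n * w"
  shows "ennreal (real k * real lam)
    \<le> expected_runtime mu lam n + ennreal (real k * real lam * (real mu + real k * real lam) * w)"
proof -
  define a where "a = real k * real lam / r^n"
  have a: "0 \<le> a" using r by (simp add: a_def)
  have "ennreal (real k * real lam) \<le> expected_runtime mu lam n
      + (\<integral>\<^sup>+P. ennreal (a * potential r P + a * (real k * real lam * B)) \<partial>init_pop mu n)"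
    unfolding expected_runtime_def
  proof (rule le_nn_integral_pmf_add)
    fix P assume "P \<in> set_pmf (init_pop mu n)"
    from runtime_after_init_ge[OF mu r B drift set_init_pop[OF this]]
    show "ennreal (real k * real lam)
      \<le> (if opt n \<in> set P then of_nat (hit_cost n P) else of_nat mu + exp_remaining mu lam n P)
        + ennreal (a * potential r P + a * (real k * real lam * B))"
      by (simp add: a_def add_divide_distrib distrib_left)
  qed
  also have "(\<integral>\<^sup>+P. ennreal (a * potential r P + a * (real k * real lam * B)) \<partial>init_pop mu n)
      = ennreal (a * (real mu * ((1 + r) / 2) ^ n) + a * (real k * real lam * B))"
    using a r B
    by (subst nn_integral_pmf_affine) (simp_all add: potential_nonneg nn_integral_potential_init_pop
        ennreal_of_nat_eq_real_of_nat ennreal_plus flip: ennreal_mult)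
  also have "a * (real mu * ((1 + r) / 2) ^ n) + a * (real k * real lam * B)
      \<le> a * (real mu * (r^n * w)) + a * (real k * real lam * (r^n * w))"
    using a init B_le by (intro add_mono mult_left_mono) auto
  also have "\<dots> = real k * real lam * (real mu + real k * real lam) * w"
    using r by (simp add: a_def field_simps)
  finally show ?thesis
    by (simp add: add_left_mono ennreal_leI)
qed

lemma expected_runtime_ge_initial:
  fixes mu lam n M :: nat and r w :: real
  assumes M: "M \<le> mu" and r: "0 < r" and init: "((1 + r) / 2) ^ n \<le> r^n * w"
  shows "ennreal M \<le> expected_runtime mu lam n + ennreal (M * M * w)"
proof -
  define J where "J P = (if opt n \<in> set P then of_nat (hit_cost n P)
    else of_nat mu + exp_remaining mu lam n P)" for P
  define a where "a = M / r^n"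
  have a: "0 \<le> a" using r by (simp add: a_def)
  have "ennreal M \<le> J P + ennreal (a * potential r (take M P))" for P
  proof (cases "opt n \<in> set (take M P)")
    case True
    then have "r^n \<le> potential r (take M P)"
      using potential_ge_if_opt_mem r by simp
    then have "M \<le> a * potential r (take M P)"
      using r by (simp add: a_def field_simps mult_left_mono)
    then show ?thesis by (simp add: ennreal_leI add_increasing)
  next
    case False
    then have "ennreal M \<le> J P"
      using M le_hit_cost[of n P M] by (auto simp: J_def add_increasing2)
    then show ?thesis by (simp add: add_increasing2)
  qed
  then have "ennreal M \<le> (\<integral>\<^sup>+P. J P \<partial>init_pop mu n)
      + (\<integral>\<^sup>+P. ennreal (a * potential r (take M P) + 0) \<partial>init_pop mu n)"
    by (intro le_nn_integral_pmf_add) simp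
  also have "(\<integral>\<^sup>+P. ennreal (a * potential r (take M P) + 0) \<partial>init_pop mu n)
      = ennreal a * (of_nat M * ennreal (((1 + r) / 2) ^ n))"
    using a r M by (subst nn_integral_pmf_affine)
      (auto simp: potential_nonneg nn_integral_potential_take_init_pop min_def)
  also have "\<dots> = ennreal (a * M * ((1 + r) / 2) ^ n)"
    using a r by (simp add: ennreal_of_nat_eq_real_of_nat mult.assoc flip: ennreal_mult)
  also have "\<dots> \<le> ennreal (a * M * (r^n * w))"
    using a init by (intro ennreal_leI mult_left_mono) auto
  also have "a * M * (r^n * w) = M * M * w"
    using r by (simp add: a_def)
  finally show ?thesis
    by (simp add: expected_runtime_def J_def)
qed

lemma half_one_plus_power_le:
  fixes r :: real
  assumes "2 \<le> r"
  shows "((1 + r) / 2) ^ n \<le> r^n * exp (- real n / 4)"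
proof -
  have "((1 + r) / 2) ^ n = r^n * ((1 + r) / (2 * r)) ^ n"
    using assms by (simp add: power_divide power_mult_distrib field_simps)
  also have "((1 + r) / (2 * r)) ^ n \<le> exp (- 1/4) ^ n"
  proof (rule power_mono)
    have "(1 + r) / (2 * r) \<le> 3/4"
      using assms by (simp add: field_simps)
    moreover have "3/4 \<le> exp (- 1/4 :: real)"
      using exp_ge_add_one_self[of "-1/4"] by simp
    ultimately show "(1 + r) / (2 * r) \<le> exp (- 1/4)"
      by linarith
  qed (use assms in simp)
  also have "exp (- 1/4) ^ n = exp (- real n / 4)"
    by (simp add: exp_of_nat_mult[symmetric])
  finally show ?thesis
    using assms by (simp add: mult_left_mono)
qed

lemma exists_multiple_between:
  fixes lam :: nat and N :: real
  assumes "0 < lam" "real lam \<le> N"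
  obtains k where "1 \<le> k" "real k * real lam \<le> N" "N < 2 * (real k * real lam)"
proof
  define k where "k = nat \<lfloor>N / lam\<rfloor>"
  have "1 \<le> N / lam"
    using assms by (simp add: field_simps)
  then show "1 \<le> k"
    by (simp add: k_def le_nat_iff)
  have "real k = of_int \<lfloor>N / lam\<rfloor>"
    using \<open>1 \<le> N / lam\<close> by (simp add: k_def)
  then have "real k \<le> N / lam" "N / lam < real k + 1"
    by linarith+
  then show "real k * real lam \<le> N"
    using assms by (simp add: le_divide_eq)
  have "N < (real k + 1) * real lam"
    using \<open>N / lam < real k + 1\<close> assms by (simp add: divide_less_eq)
  moreover have "1 * real lam \<le> real k * real lam"
    using \<open>1 \<le> k\<close> by (intro mult_right_mono) auto
  ultimately show "N < 2 * (real k * real lam)"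
    by (simp add: distrib_right)
qed

lemma expected_runtime_ge_by_generations:
  fixes mu lam n :: nat and r w N :: real
  assumes mu: "1 \<le> mu" "mu \<le> lam" and r: "0 < r" and w: "0 \<le> w"
    and drift: "potential_drift_bounded mu lam n r (r^n * w)" and init: "((1 + r) / 2) ^ n \<le> r^n * w"
    and N: "real lam \<le> N" "N^2 * w \<le> 1"
  shows "ennreal (N / 2 - 2) \<le> expected_runtime mu lam n"
proof -
  obtain k where k: "1 \<le> k" "real k * real lam \<le> N" "N < 2 * (real k * real lam)"
    using exists_multiple_between[OF _ N(1)] mu by auto
  define d where "d = real k * real lam * (real mu + real k * real lam) * w"
  have "ennreal (real k * real lam) \<le> expected_runtime mu lam n + ennreal d"
    unfolding d_def using r w init by (intro expected_runtime_ge_generations[OF mu _ _ drift]) auto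
  then have "ennreal (real k * real lam - d) \<le> expected_runtime mu lam n"
    using w by (intro ennreal_diff_le_of_le_add) (auto simp: d_def)
  moreover have "d \<le> N * (N + N) * w"
    unfolding d_def using k mu N w by (intro mult_right_mono mult_mono add_mono) auto
  then have "N / 2 - 2 \<le> real k * real lam - d"
    using k N by (simp add: power2_eq_square algebra_simps)
  ultimately show ?thesis
    by (meson ennreal_leI order_trans)
qed

lemma expected_runtime_ge_by_initial:
  fixes mu lam n :: nat and r w N :: real
  assumes r: "0 < r" and w: "0 \<le> w" and init: "((1 + r) / 2) ^ n \<le> r^n * w"
    and N: "0 < N" "N \<le> 3 * real mu" "N^2 * w \<le> 1"
  shows "ennreal (N / 3 - 2) \<le> expected_runtime mu lam n"
proof -
  define M where "M = nat \<lfloor>N / 3\<rfloor>"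
  have "real M = of_int \<lfloor>N / 3\<rfloor>"
    using N by (simp add: M_def)
  then have M: "real M \<le> N / 3" "N / 3 < real M + 1"
    by linarith+
  then have "M \<le> mu"
    using N by linarith
  have "ennreal M \<le> expected_runtime mu lam n + ennreal (M * M * w)"
    using expected_runtime_ge_initial[OF \<open>M \<le> mu\<close> r init] by simp
  then have "ennreal (M - M * M * w) \<le> expected_runtime mu lam n"
    using w by (intro ennreal_diff_le_of_le_add) auto
  moreover have "M * M * w \<le> N^2 * w"
    using M N w by (intro mult_right_mono) (auto simp: power2_eq_square intro: mult_mono)
  then have "N / 3 - 2 \<le> M - M * M * w"
    using M N by linarith
  ultimately show ?thesis
    by (meson ennreal_leI order_trans)
qed

lemma exp_div_8_le:
  fixes g :: real
  assumes "40 \<le> g"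
  shows "exp (g / 8) \<le> exp (g / 4) / 3 - 2"
proof -
  define y where "y = exp (g / 8)"
  have "6 \<le> y"
    using exp_ge_add_one_self[of "g / 8"] assms unfolding y_def by linarith
  then have "3 * y \<le> y * y - 6"
    using mult_right_mono[of 6 y y] by linarith
  moreover have "exp (g / 4) = y * y"
    by (simp add: y_def exp_add[symmetric])
  ultimately show ?thesis
    by (simp add: y_def)
qed

text \<open>With \<open>N = e^{\<gamma>/4}\<close>: if \<open>\<lambda> \<le> N\<close>, about \<open>N/\<lambda>\<close> generations cost \<open>N/2\<close> evaluations; otherwise
  \<open>\<mu> \<ge> \<lambda>/3 > N/3\<close>, and already the initial population costs \<open>N/3\<close> evaluations.\<close>
lemma expected_runtime_ge_exp_barrier:
  fixes eps :: real and mu lam n :: nat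
  assumes eps: "0 < eps" "eps < 1" and mu: "1 \<le> mu" "mu \<le> lam"
    and lam: "real lam \<le> (1 - eps) * exp 1 * real mu" and n: "8 / eps \<le> n"
    and large: "40 \<le> barrier_exponent eps n"
  shows "ennreal (exp (barrier_exponent eps n / 8)) \<le> expected_runtime mu lam n"
proof -
  define r where "r = 8 / eps"
  define g where "g = barrier_exponent eps n"
  define w where "w = exp (- g)"
  define N where "N = exp (g / 4)"
  have r: "8 \<le> r" using eps by (simp add: r_def le_divide_eq)
  have N: "0 < N" "N^2 * w \<le> 1"
    using large by (simp_all add: N_def w_def exp_of_nat_mult[symmetric] exp_add[symmetric] g_def)
  have "r^n * exp (- real n / 4) \<le> r^n * w"
    using barrier_exponent_le[OF eps, of n] r by (intro mult_left_mono) (auto simp: w_def g_def)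
  then have init: "((1 + r) / 2) ^ n \<le> r^n * w"
    using half_one_plus_power_le[of r n] r by linarith
  have "(1 - eps) * exp 1 * real mu \<le> 1 * 3 * real mu"
    using eps exp_le by (intro mult_right_mono mult_mono) auto
  then have lam3: "real lam \<le> 3 * real mu"
    using lam by linarith
  have "ennreal (N / 3 - 2) \<le> expected_runtime mu lam n"
  proof (cases "real lam \<le> N")
    case True
    have "potential_drift_bounded mu lam n r (r^n * w)"
      using potential_drift_bounded_mutation[OF eps n lam mu] by (simp add: r_def w_def g_def)
    then have "ennreal (N / 2 - 2) \<le> expected_runtime mu lam n"
      using r N True init by (intro expected_runtime_ge_by_generations[OF mu]) (auto simp: w_def)
    moreover have "N / 3 - 2 \<le> N / 2 - 2"
      using N by simp
    ultimately show ?thesis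
      by (meson ennreal_leI order_trans)
  next
    case False
    then show ?thesis
      using r N init lam3 by (intro expected_runtime_ge_by_initial) (auto simp: w_def)
  qed
  then show ?thesis
    using exp_div_8_le[OF large] unfolding g_def N_def by (meson ennreal_leI order_trans)
qed

section \<open>Asymptotics\<close>

lemma expected_runtime_exponential:
  fixes mu lam :: "nat \<Rightarrow> nat" and eps :: real
  assumes mu: "\<And>n. 1 \<le> mu n" "\<And>n. mu n \<le> lam n" and eps: "0 < eps" "eps < 1"
    and lam: "\<And>n. real (lam n) \<le> (1 - eps) * exp 1 * real (mu n)"
  shows "\<exists>c>0. \<forall>\<^sub>F n in sequentially. ennreal (exp (c * real n)) \<le> expected_runtime (mu n) (lam n) n"
proof -
  define c where "c = eps^2 * (ln (8/eps) - 1) / 16"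
  have barrier: "barrier_exponent eps n = c * n" for n
    by (simp add: barrier_exponent_def c_def)
  have "0 < eps^2 / 32" using eps by simp
  also have "eps^2 / 32 \<le> c"
    using barrier_exponent_ge(1)[OF eps, of 1] by (simp add: barrier)
  finally have c: "0 < c" .
  have "\<forall>\<^sub>F n in sequentially. 8 / eps \<le> real n \<and> 40 / c \<le> real n"
    by (intro eventually_conj) real_asymp+
  then have "\<forall>\<^sub>F n in sequentially. ennreal (exp (c / 8 * real n)) \<le> expected_runtime (mu n) (lam n) n"
  proof eventually_elim
    case (elim n)
    then have "40 \<le> barrier_exponent eps n"
      using c by (simp add: barrier field_simps)
    then show ?case
      using expected_runtime_ge_exp_barrier[OF eps mu lam] elim by (simp add: barrier)
  qed
  then show ?thesis
    using c by (intro exI[of _ "c / 8"]) auto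
qed

lemma barrier_exponent_ge_ln:
  fixes e K :: real
  assumes e: "0 < e" "e < 1" and n: "1 \<le> n" and K: "K^2 \<le> e^2 * n" and small: "e * n powr (1/4) \<le> 1"
  shows "K^2 / 64 * ln n \<le> barrier_exponent e n"
proof -
  have "n powr (1/4) \<le> 1 / e"
    using small e by (simp add: field_simps)
  then have "ln (n powr (1/4)) \<le> ln (1 / e)"
    using n by (intro ln_mono) auto
  then have "ln n / 4 \<le> ln (1 / e)"
    using n by (simp add: ln_powr)
  then have "K^2 * (ln n / 4) \<le> e^2 * n * ln (1 / e)"
    using K n by (intro mult_mono) auto
  then show ?thesis
    using barrier_exponent_ge(2)[OF e, of n] by simp
qed

lemma barrier_exponent_ge_sqrt:
  fixes e :: real
  assumes e: "0 < e" "e < 1" and n: "1 \<le> n" and large: "1 < e * n powr (1/4)"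
  shows "sqrt n / 32 \<le> barrier_exponent e n"
proof -
  have "1 < (e * n powr (1/4))^2"
    using large by (simp add: one_less_power)
  moreover have "(n powr (1/4))^2 = sqrt n"
    using n by (simp add: powr_realpow[symmetric] powr_powr powr_half_sqrt)
  ultimately have "1 * sqrt n < e^2 * sqrt n * sqrt n"
    using n by (intro mult_strict_right_mono) (simp_all add: power_mult_distrib)
  then have "sqrt n \<le> e^2 * n"
    by (simp add: mult.assoc)
  then show ?thesis
    using barrier_exponent_ge(1)[OF e, of n] by simp
qed

lemma barrier_exponent_superlogarithmic:
  fixes eps :: "nat \<Rightarrow> real" and C :: real
  assumes eps: "\<And>n. 0 < eps n" "\<And>n. eps n < 1" and small: "(\<lambda>n. 1 / sqrt (real n)) \<in> o(eps)"
  shows "\<forall>\<^sub>F n in sequentially. C * ln n \<le> barrier_exponent (eps n) n"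
proof -
  define K where "K = 8 * (\<bar>C\<bar> + 1)"
  have K: "8 \<le> K" by (simp add: K_def)
  have "C \<le> (\<bar>C\<bar> + 1) * 1" by simp
  also have "\<dots> \<le> (\<bar>C\<bar> + 1) * (\<bar>C\<bar> + 1)" by (intro mult_left_mono) auto
  also have "\<dots> = K^2 / 64" by (simp add: K_def power2_eq_square algebra_simps)
  finally have CK: "C \<le> K^2 / 64" .
  have "\<forall>\<^sub>F n in sequentially. 1 / sqrt (real n) \<le> (1 / K) * eps n"
    using landau_o.smallD[OF small, of "1 / K"] K eps(1) by (simp add: less_imp_le)
  moreover have "\<forall>\<^sub>F n in sequentially. ln (real n) / sqrt (real n) \<le> 1 / (32 * (\<bar>C\<bar> + 1))"
    by real_asymp
  moreover have "\<forall>\<^sub>F n in sequentially. 1 \<le> real n"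
    by real_asymp
  ultimately show ?thesis
  proof eventually_elim
    case (elim n)
    have e: "0 < eps n" "eps n < 1" using eps by auto
    have lnn: "0 \<le> ln n" using elim by simp
    show ?case
    proof (cases "eps n * n powr (1/4) \<le> 1")
      case True
      have "K \<le> eps n * sqrt n"
        using elim K by (simp add: field_simps)
      then have "K^2 \<le> (eps n * sqrt n)^2"
        using K by (intro power_mono) auto
      then have "K^2 \<le> (eps n)^2 * n"
        using elim by (simp add: power_mult_distrib)
      moreover have "C * ln n \<le> K^2 / 64 * ln n"
        using CK lnn by (rule mult_right_mono)
      ultimately show ?thesis
        using barrier_exponent_ge_ln[OF e _ _ True] elim by fastforce
    next
      case False
      have "C * ln n \<le> (\<bar>C\<bar> + 1) * ln n"
        using lnn by (intro mult_right_mono) auto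
      also have "\<dots> \<le> sqrt n / 32"
        using elim by (simp add: field_simps)
      finally show ?thesis
        using barrier_exponent_ge_sqrt[OF e _ ] False elim by fastforce
    qed
  qed
qed

lemma expected_runtime_superpolynomial:
  fixes mu lam :: "nat \<Rightarrow> nat" and eps :: "nat \<Rightarrow> real" and d :: real
  assumes mu: "\<And>n. 1 \<le> mu n" "\<And>n. mu n \<le> lam n"
    and eps: "\<And>n. 0 < eps n" "\<And>n. eps n < 1" and small: "(\<lambda>n. 1 / sqrt (real n)) \<in> o(eps)"
    and lam: "\<And>n. real (lam n) \<le> (1 - eps n) * exp 1 * real (mu n)"
  shows "\<forall>\<^sub>F n in sequentially. ennreal (real n powr d) \<le> expected_runtime (mu n) (lam n) n"
proof -
  have "\<forall>\<^sub>F n in sequentially. 1 / sqrt (real n) \<le> (1 / 8) * eps n"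
    using landau_o.smallD[OF small, of "1 / 8"] eps(1) by (simp add: less_imp_le)
  moreover have "\<forall>\<^sub>F n in sequentially. (8 * \<bar>d\<bar> + 40) * ln n \<le> barrier_exponent (eps n) n"
    by (rule barrier_exponent_superlogarithmic[OF eps small])
  moreover have "\<forall>\<^sub>F n in sequentially. 3 \<le> real n"
    by real_asymp
  ultimately show ?thesis
  proof eventually_elim
    case (elim n)
    have "1 \<le> ln n"
      using elim exp_le by (subst ln_ge_iff) auto
    then have "d * ln n \<le> \<bar>d\<bar> * ln n" "0 \<le> \<bar>d\<bar> * ln n"
      by (auto intro: mult_right_mono)
    moreover have "8 * (\<bar>d\<bar> * ln n) + 40 * ln n \<le> barrier_exponent (eps n) n"
      using elim(2) by (simp add: algebra_simps)
    ultimately have large: "40 \<le> barrier_exponent (eps n) n"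
      and exponent: "d * ln n \<le> barrier_exponent (eps n) n / 8"
      using \<open>1 \<le> ln n\<close> by linarith+
    have "8 / eps n \<le> sqrt n"
      using elim eps(1)[of n] by (simp add: field_simps)
    also have "\<dots> \<le> sqrt n * sqrt n"
      using elim by (intro mult_le_cancel_left1[THEN iffD2] ) auto
    also have "\<dots> = n"
      by simp
    finally have "ennreal (exp (barrier_exponent (eps n) n / 8)) \<le> expected_runtime (mu n) (lam n) n"
      using expected_runtime_ge_exp_barrier[OF eps(1,2) mu lam] large by blast
    moreover have "real n powr d \<le> exp (barrier_exponent (eps n) n / 8)"
      using elim exponent by (simp add: powr_def)
    ultimately show ?case
      by (meson ennreal_leI order_trans)
  qed
qed

theorem theorem3:
  fixes mu lam :: "nat \<Rightarrow> nat"
  assumes mu_pos: "\<And>n. mu n \<ge> 1"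
    and lam_pos: "\<And>n. lam n \<ge> 1"
    and mu_le_lam: "\<And>n. mu n \<le> lam n"
  shows
    "(\<forall>\<epsilon>::real. 0 < \<epsilon> \<and> \<epsilon> < 1 \<and> (\<forall>n. real (lam n) \<le> (1 - \<epsilon>) * exp 1 * real (mu n)) \<longrightarrow>
        (\<exists>c>0. \<forall>\<^sub>F n in sequentially.
            ennreal (exp (c * real n)) \<le> expected_runtime (mu n) (lam n) n))
     \<and>
     (\<forall>\<epsilon>::nat \<Rightarrow> real. (\<forall>n. 0 < \<epsilon> n \<and> \<epsilon> n < 1) \<and> (\<lambda>n. 1 / sqrt (real n)) \<in> o(\<epsilon>) \<and>
        (\<forall>n. real (lam n) \<le> (1 - \<epsilon> n) * exp 1 * real (mu n)) \<longrightarrow>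
        (\<forall>d::real. \<forall>\<^sub>F n in sequentially.
            ennreal (real n powr d) \<le> expected_runtime (mu n) (lam n) n))"
proof (intro conjI allI impI)
  fix eps :: real
  assume "0 < eps \<and> eps < 1 \<and> (\<forall>n. real (lam n) \<le> (1 - eps) * exp 1 * real (mu n))"
  then show "\<exists>c>0. \<forall>\<^sub>F n in sequentially. ennreal (exp (c * real n)) \<le> expected_runtime (mu n) (lam n) n"
    by (intro expected_runtime_exponential[OF mu_pos mu_le_lam, of eps]) auto
next
  fix eps :: "nat \<Rightarrow> real" and d :: real
  assume "(\<forall>n. 0 < eps n \<and> eps n < 1) \<and> (\<lambda>n. 1 / sqrt (real n)) \<in> o(eps) \<and>
    (\<forall>n. real (lam n) \<le> (1 - eps n) * exp 1 * real (mu n))"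
  then show "\<forall>\<^sub>F n in sequentially. ennreal (real n powr d) \<le> expected_runtime (mu n) (lam n) n"
    by (intro expected_runtime_superpolynomial[OF mu_pos mu_le_lam, of eps]) auto
qed

end
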